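(* Let $a>0$, $b>0$, $c>0$, $P>0$, $\mu>0$ be constants and set $\lambda_a=ac$, $\tilde\lambda_a=a(b+c)$. For $\gamma>0$ define $$\Delta(\gamma)=\frac{e^{\gamma P/\lambda_a}-1}{e^{\gamma P/\tilde\lambda_a}-1},\qquad \hat\Delta(\gamma)=\exp\!\Big(\gamma P\,\frac{\tilde\lambda_a-\lambda_a}{\tilde\lambda_a\lambda_a}\Big),$$ and for a positive function $D$ on $(0,\infty)$ let $$J[D]=\int_0^{\infty}\Big(1-\frac{ab}{\gamma P}\,D(\gamma)^{-c/b}\big(e^{\gamma P/(a(b+c))}-1\big)\Big)\frac{1}{\mu}e^{-\gamma/\mu}\,d\gamma.$$ Then $\Delta(\gamma)>\hat\Delta(\gamma)$ for every $\gamma>0$, and $$J[\hat\Delta]=1+\frac{ab}{P\mu}\ln\!\Big(\frac{a(b+c)}{a(b+c)+P\mu}\Big)<J[\Delta].$$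
   Context: In the paper, $a=l_{rw}\theta_r$ (path loss to the warden times $\theta_r=\sum_n\beta_r^n$, the total reflection amplitude-squared of the STAR-RIS), $b=\varpi_b=\mathbf w_b^H\mathbf w_b$, $c=\varpi_c=\mathbf w_c^H\mathbf w_c$, $P=P_j^{\max}$, and $\mu=\lambda_{rw}=\|\boldsymbol\Theta_t\mathbf h_{rc}^*\|_2^2$; the quantity $\gamma$ is exponentially distributed with mean $\mu$. $J[\Delta]$ is the (asymptotic) average minimum detection error probability $\overline P^*_{ea}$ of the warden and $J[\hat\Delta]=\hat P^*_{ea}$ is its lower bound used as the covertness constraint. *)

theory Defs
  imports "HOL-Analysis.Analysis"
begin

definition Delta :: "real \<Rightarrow> real \<Rightarrow> real \<Rightarrow> real \<Rightarrow> real \<Rightarrow> real" where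
  "Delta a b c P \<gamma> = (exp (\<gamma> * P / (a * c)) - 1) / (exp (\<gamma> * P / (a * (b + c))) - 1)"

definition Delta_hat :: "real \<Rightarrow> real \<Rightarrow> real \<Rightarrow> real \<Rightarrow> real \<Rightarrow> real" where
  "Delta_hat a b c P \<gamma> =
     exp (\<gamma> * P * ((a * (b + c) - a * c) / (a * (b + c) * (a * c))))"

definition J_integrand :: "real \<Rightarrow> real \<Rightarrow> real \<Rightarrow> real \<Rightarrow> real \<Rightarrow> (real \<Rightarrow> real) \<Rightarrow> real \<Rightarrow> real" where
  "J_integrand a b c P \<mu> D \<gamma> =
     (1 - (a * b) / (\<gamma> * P) * (D \<gamma>) powr (- c / b) * (exp (\<gamma> * P / (a * (b + c))) - 1))
     * (1 / \<mu>) * exp (- \<gamma> / \<mu>)"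

definition J :: "real \<Rightarrow> real \<Rightarrow> real \<Rightarrow> real \<Rightarrow> real \<Rightarrow> (real \<Rightarrow> real) \<Rightarrow> real" where
  "J a b c P \<mu> D = (LBINT \<gamma>:{0<..}. J_integrand a b c P \<mu> D \<gamma>)"

end

theory Submission
  imports Defs
begin

text \<open>Write \<open>e = exp (\<gamma> P / (a c))\<close> and \<open>u = exp (\<gamma> P / (a (b + c)))\<close>, so that
  \<open>1 < u < e\<close>, \<open>\<Delta> = (e - 1) / (u - 1)\<close> and \<open>\<hat>\<Delta> = e / u\<close>; then \<open>\<Delta> > \<hat>\<Delta>\<close> is the
  elementary inequality \<open>e / u < (e - 1) / (u - 1)\<close>. Since \<open>D \<mapsto> D powr (-c/b)\<close> is
  decreasing, the integrand of \<open>J[D]\<close> increases strictly with \<open>D\<close>, which gives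
  \<open>J[\<hat>\<Delta>] < J[\<Delta>]\<close> once both are integrable. Finally \<open>\<hat>\<Delta> powr (-c/b) = 1/u\<close>, so the
  integrand of \<open>J[\<hat>\<Delta>]\<close> is the exponential density minus a multiple of the Frullani
  integrand \<open>(exp (-m\<gamma>) - exp (-n\<gamma>)) / \<gamma> = \<integral>\<^sub>m\<^sup>n exp (-t\<gamma>) dt\<close>, whose integral is
  \<open>ln (n/m)\<close> by Fubini.\<close>

lemma nn_integral_exp_neg_Ioi:
  fixes s :: real
  assumes "s > 0"
  shows "(\<integral>\<^sup>+x. ennreal (exp (- s * x)) * indicator {0<..} x \<partial>lborel) = ennreal (1 / s)"
proof -
  have "(\<integral>\<^sup>+x. ennreal (exp (- s * x)) * indicator {0<..} x \<partial>lborel)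
      = (\<integral>\<^sup>+x. ennreal (exp (- s * x)) * indicator {0..} x \<partial>lborel)"
    by (intro nn_integral_cong_AE AE_I[where N="{0}"]) (auto split: split_indicator)
  also have "\<dots> = ennreal (0 - (- exp (- s * 0) / s))"
  proof (rule nn_integral_FTC_atLeast)
    have "((\<lambda>x. - exp (- s * x) / s) \<longlongrightarrow> - 0 / s) at_top"
      by (intro tendsto_intros filterlim_compose[OF exp_at_bot]
          filterlim_tendsto_neg_mult_at_bot[OF tendsto_const] filterlim_ident) (use assms in auto)
    then show "((\<lambda>x. - exp (- s * x) / s) \<longlongrightarrow> 0) at_top" by simp
  qed (use assms in \<open>auto intro!: derivative_eq_intros\<close>)
  finally show ?thesis by simp
qed

lemma set_integral_eq_nn_integral:
  fixes f :: "'a \<Rightarrow> real"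
  assumes "f \<in> borel_measurable M" "A \<in> sets M"
    and "\<And>x. x \<in> A \<Longrightarrow> 0 \<le> f x"
    and "(\<integral>\<^sup>+x. ennreal (f x) * indicator A x \<partial>M) = ennreal v" "0 \<le> v"
  shows "set_integrable M A f" "(LINT x:A|M. f x) = v"
proof -
  have "has_bochner_integral M (\<lambda>x. indicator A x *\<^sub>R f x) v"
  proof (rule has_bochner_integral_nn_integral)
    show "(\<integral>\<^sup>+x. ennreal (indicator A x *\<^sub>R f x) \<partial>M) = ennreal v"
      using assms(4) by (metis (no_types, lifting) indicator_mult_ennreal mult.commute
          nn_integral_cong real_scaleR_def)
  qed (use assms in \<open>auto intro!: AE_I2 split: split_indicator\<close>)
  then show "set_integrable M A f" "(LINT x:A|M. f x) = v"
    unfolding set_integrable_def set_lebesgue_integral_def has_bochner_integral_iff by auto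
qed

lemma exponential_density_set_integral:
  fixes m :: real
  assumes "m > 0"
  shows "set_integrable lborel {0<..} (\<lambda>x. m * exp (- m * x))"
    and "(LINT x:{0<..}|lborel. m * exp (- m * x)) = 1"
proof -
  have "(\<integral>\<^sup>+x. ennreal (m * exp (- m * x)) * indicator {0<..} x \<partial>lborel)
      = (\<integral>\<^sup>+x. ennreal m * (ennreal (exp (- m * x)) * indicator {0<..} x) \<partial>lborel)"
    using assms by (intro nn_integral_cong) (simp add: ennreal_mult mult.assoc)
  also have "\<dots> = ennreal 1"
    using assms nn_integral_exp_neg_Ioi[OF assms]
    by (simp add: nn_integral_cmult ennreal_mult[symmetric])
  finally have nn: "(\<integral>\<^sup>+x. ennreal (m * exp (- m * x)) * indicator {0<..} x \<partial>lborel) = ennreal 1" .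
  show "set_integrable lborel {0<..} (\<lambda>x. m * exp (- m * x))"
    and "(LINT x:{0<..}|lborel. m * exp (- m * x)) = 1"
    using set_integral_eq_nn_integral[OF _ _ _ nn] assms by auto
qed

lemma frullani_exp_set_integral:
  fixes m n :: real
  assumes "0 < m" "m \<le> n"
  shows "set_integrable lborel {0<..} (\<lambda>x. (exp (- m * x) - exp (- n * x)) / x)"
    and "(LINT x:{0<..}|lborel. (exp (- m * x) - exp (- n * x)) / x) = ln (n / m)"
proof -
  have inner: "ennreal ((exp (- m * x) - exp (- n * x)) / x)
      = (\<integral>\<^sup>+t. ennreal (exp (- t * x)) * indicator {m..n} t \<partial>lborel)" if "x > 0" for x
  proof -
    have "(\<integral>\<^sup>+t. ennreal (exp (- t * x)) * indicator {m..n} t \<partial>lborel)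
        = ennreal (- exp (- n * x) / x - - exp (- m * x) / x)"
      by (rule nn_integral_FTC_Icc)
        (use that assms in \<open>auto intro!: derivative_eq_intros simp: field_simps\<close>)
    then show ?thesis by (simp add: diff_divide_distrib)
  qed
  have "(\<integral>\<^sup>+x. ennreal ((exp (- m * x) - exp (- n * x)) / x) * indicator {0<..} x \<partial>lborel)
      = (\<integral>\<^sup>+x. \<integral>\<^sup>+t. ennreal (exp (- t * x)) * indicator {m..n} t * indicator {0<..} x
            \<partial>lborel \<partial>lborel)"
  proof (rule nn_integral_cong)
    fix x :: real
    show "ennreal ((exp (- m * x) - exp (- n * x)) / x) * indicator {0<..} x
        = (\<integral>\<^sup>+t. ennreal (exp (- t * x)) * indicator {m..n} t * indicator {0<..} x \<partial>lborel)"
    proof (cases "x > 0")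
      case True
      show ?thesis unfolding inner[OF True] by (simp add: nn_integral_multc)
    qed simp
  qed
  also have "\<dots> = (\<integral>\<^sup>+t. \<integral>\<^sup>+x. ennreal (exp (- t * x)) * indicator {m..n} t * indicator {0<..} x
            \<partial>lborel \<partial>lborel)"
    by (rule lborel_pair.Fubini'[symmetric]) auto
  also have "\<dots> = (\<integral>\<^sup>+t. ennreal (1 / t) * indicator {m..n} t \<partial>lborel)"
  proof (intro nn_integral_cong)
    fix t :: real
    show "(\<integral>\<^sup>+x. ennreal (exp (- t * x)) * indicator {m..n} t * indicator {0<..} x \<partial>lborel)
        = ennreal (1 / t) * indicator {m..n} t"
      using assms nn_integral_exp_neg_Ioi[of t]
      by (cases "t \<in> {m..n}") (auto simp: mult.commute[of _ "indicator {m..n} t"]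
          mult.assoc nn_integral_cmult)
  qed
  also have "\<dots> = ennreal (ln n - ln m)"
    by (rule nn_integral_FTC_Icc) (use assms in \<open>auto intro!: derivative_eq_intros\<close>)
  also have "ln n - ln m = ln (n / m)"
    using assms by (simp add: ln_div)
  finally have nn: "(\<integral>\<^sup>+x. ennreal ((exp (- m * x) - exp (- n * x)) / x) * indicator {0<..} x \<partial>lborel)
      = ennreal (ln (n / m))" .
  show "set_integrable lborel {0<..} (\<lambda>x. (exp (- m * x) - exp (- n * x)) / x)"
    and "(LINT x:{0<..}|lborel. (exp (- m * x) - exp (- n * x)) / x) = ln (n / m)"
    using set_integral_eq_nn_integral[OF _ _ _ nn] assms by (auto simp: divide_nonneg_pos)
qed

lemma set_integrable_between:
  fixes f g h :: "'a \<Rightarrow> real"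
  assumes "set_integrable M A f" "set_integrable M A g" "set_borel_measurable M A h"
    and "\<And>x. x \<in> A \<Longrightarrow> f x \<le> h x" "\<And>x. x \<in> A \<Longrightarrow> h x \<le> g x"
  shows "set_integrable M A h"
proof (rule set_integrable_bound)
  show "set_integrable M A (\<lambda>x. \<bar>f x\<bar> + \<bar>g x\<bar>)"
    using assms(1,2) by (intro set_integral_add(1) set_integrable_abs)
  show "AE x in M. x \<in> A \<longrightarrow> norm (h x) \<le> norm (\<bar>f x\<bar> + \<bar>g x\<bar>)"
    using assms(4,5) by (intro AE_I2) force
qed (fact assms(3))

lemma set_integral_strict_mono:
  fixes f g :: "'a \<Rightarrow> real"
  assumes "set_integrable M A f" "set_integrable M A g" "A \<in> sets M" "emeasure M A \<noteq> 0"
    and "\<And>x. x \<in> A \<Longrightarrow> f x < g x"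
  shows "(LINT x:A|M. f x) < (LINT x:A|M. g x)"
proof -
  define d where "d = (\<lambda>x. indicator A x * (g x - f x))"
  have int_d: "integrable M d"
    using set_integral_diff(1)[OF assms(2,1)] by (simp add: d_def set_integrable_def)
  have d_nonneg: "0 \<le> d x" for x
    using assms(5) by (auto simp: d_def less_imp_le split: split_indicator)
  have "integral\<^sup>L M d \<noteq> 0"
  proof
    assume "integral\<^sup>L M d = 0"
    then have "AE x in M. d x = 0"
      using integral_nonneg_eq_0_iff_AE[OF int_d] d_nonneg by auto
    then have "AE x in M. x \<notin> A"
      by (rule AE_mp) (auto intro!: AE_I2 dest: assms(5) simp: d_def)
    then have "emeasure M A = 0"
      using AE_iff_measurable[OF assms(3), where P = "\<lambda>x. x \<notin> A"]
        sets.sets_into_space[OF assms(3)] by auto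
    with assms(4) show False by simp
  qed
  moreover have "integral\<^sup>L M d = (LINT x:A|M. g x) - (LINT x:A|M. f x)"
    using set_integral_diff(2)[OF assms(2,1)]
    by (simp add: d_def set_lebesgue_integral_def)
  moreover have "0 \<le> integral\<^sup>L M d"
    by (intro integral_nonneg_AE AE_I2 d_nonneg)
  ultimately show ?thesis by simp
qed

lemma divide_less_diff_divide:
  fixes e u :: "'a :: linordered_field"
  assumes "1 < u" "u < e"
  shows "e / u < (e - 1) / (u - 1)"
  using assms by (simp add: divide_simps) (simp add: algebra_simps)

lemma Delta_hat_less_Delta:
  assumes "a > 0" "b > 0" "c > 0" "P > 0" "\<gamma> > 0"
  shows "Delta_hat a b c P \<gamma> < Delta a b c P \<gamma>"
proof -
  have ne: "a \<noteq> 0" "c \<noteq> 0" "b + c \<noteq> 0" using assms by auto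
  define e where "e = exp (\<gamma> * P / (a * c))"
  define u where "u = exp (\<gamma> * P / (a * (b + c)))"
  have "\<gamma> * P / (a * (b + c)) < \<gamma> * P / (a * c)"
    using assms by (intro divide_strict_left_mono) auto
  then have "u < e" by (simp add: u_def e_def)
  moreover have "1 < u" using assms by (simp add: u_def)
  moreover have "\<gamma> * P * ((a * (b + c) - a * c) / (a * (b + c) * (a * c)))
      = \<gamma> * P / (a * c) - \<gamma> * P / (a * (b + c))"
    by (simp add: divide_simps ne) (simp add: algebra_simps)
  then have "Delta_hat a b c P \<gamma> = e / u"
    by (simp add: Delta_hat_def e_def u_def exp_diff)
  ultimately show ?thesis
    using divide_less_diff_divide[of u e] by (simp add: Delta_def e_def u_def)
qed

lemma Delta_hat_powr:
  assumes "a > 0" "b > 0" "c > 0"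
  shows "Delta_hat a b c P \<gamma> powr (- c / b) = exp (- (P / (a * (b + c))) * \<gamma>)"
proof -
  have ne: "a \<noteq> 0" "b \<noteq> 0" "c \<noteq> 0" "b + c \<noteq> 0" using assms by auto
  have "(a * (b + c) - a * c) / (a * (b + c) * (a * c)) * (- c / b) = - 1 / (a * (b + c))"
    by (simp add: divide_simps ne) (simp add: algebra_simps)
  then have "\<gamma> * P * ((a * (b + c) - a * c) / (a * (b + c) * (a * c))) * (- c / b)
      = - (P / (a * (b + c))) * \<gamma>"
    by (simp only: mult.assoc) simp
  then show ?thesis by (simp add: Delta_hat_def exp_powr_real)
qed

lemma J_integrand_eq:
  "J_integrand a b c P \<mu> D \<gamma>
    = (1 - a * b / (\<gamma> * P) * (exp (\<gamma> * P / (a * (b + c))) - 1) * D \<gamma> powr (- c / b))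
      * (1 / \<mu> * exp (- \<gamma> / \<mu>))"
  unfolding J_integrand_def by (simp only: mult_ac)

lemma J_integrand_less:
  assumes "a > 0" "b > 0" "c > 0" "P > 0" "\<mu> > 0" "\<gamma> > 0"
    and "0 < D\<^sub>1 \<gamma>" "D\<^sub>1 \<gamma> < D\<^sub>2 \<gamma>"
  shows "J_integrand a b c P \<mu> D\<^sub>1 \<gamma> < J_integrand a b c P \<mu> D\<^sub>2 \<gamma>"
proof -
  define K where "K = a * b / (\<gamma> * P) * (exp (\<gamma> * P / (a * (b + c))) - 1)"
  have "K > 0" using assms by (simp add: K_def)
  moreover have "D\<^sub>2 \<gamma> powr (- c / b) < D\<^sub>1 \<gamma> powr (- c / b)"
    using assms by (intro powr_less_mono2_neg) auto
  ultimately have "1 - K * D\<^sub>1 \<gamma> powr (- c / b) < 1 - K * D\<^sub>2 \<gamma> powr (- c / b)"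
    by simp
  then show ?thesis
    unfolding J_integrand_eq K_def[symmetric] using assms(5) by (intro mult_strict_right_mono) auto
qed

lemma J_integrand_le_density:
  assumes "a > 0" "b > 0" "c > 0" "P > 0" "\<mu> > 0" "\<gamma> > 0"
  shows "J_integrand a b c P \<mu> D \<gamma> \<le> 1 / \<mu> * exp (- \<gamma> / \<mu>)"
proof -
  define K where "K = a * b / (\<gamma> * P) * (exp (\<gamma> * P / (a * (b + c))) - 1)"
  have "K > 0" using assms by (simp add: K_def)
  then have "1 - K * D \<gamma> powr (- c / b) \<le> 1" by simp
  from mult_right_mono[OF this, of "1 / \<mu> * exp (- \<gamma> / \<mu>)"] show ?thesis
    unfolding J_integrand_eq K_def[symmetric] using assms(5) by simp
qed

lemma J_integrand_Delta_hat:
  assumes "a > 0" "b > 0" "c > 0" "P > 0" "\<mu> > 0" "\<gamma> > 0"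
  shows "J_integrand a b c P \<mu> (Delta_hat a b c P) \<gamma>
    = 1 / \<mu> * exp (- (1 / \<mu>) * \<gamma>)
      - a * b / (P * \<mu>) * ((exp (- (1 / \<mu>) * \<gamma>) - exp (- (1 / \<mu> + P / (a * (b + c))) * \<gamma>)) / \<gamma>)"
proof -
  define k where "k = P / (a * (b + c))"
  have "exp (\<gamma> * P / (a * (b + c))) = exp (k * \<gamma>)" by (simp add: k_def)
  moreover have "exp (- (1 / \<mu> + k) * \<gamma>) = exp (- (1 / \<mu>) * \<gamma>) * exp (- k * \<gamma>)"
    by (simp add: exp_add[symmetric] algebra_simps)
  moreover have "exp (- k * \<gamma>) * exp (k * \<gamma>) = 1"
    by (simp add: exp_add[symmetric])
  ultimately show ?thesis
    unfolding J_integrand_eq Delta_hat_powr[OF assms(1-3)] k_def[symmetric]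
    using assms by (simp add: field_simps)
qed

lemma J_Delta_hat_eq:
  assumes "a > 0" "b > 0" "c > 0" "P > 0" "\<mu> > 0"
  shows "set_integrable lborel {0<..} (J_integrand a b c P \<mu> (Delta_hat a b c P))"
    and "J a b c P \<mu> (Delta_hat a b c P)
      = 1 + a * b / (P * \<mu>) * ln (a * (b + c) / (a * (b + c) + P * \<mu>))"
proof -
  define m where "m = 1 / \<mu>"
  define n where "n = 1 / \<mu> + P / (a * (b + c))"
  have mn: "0 < m" "m \<le> n" using assms by (simp_all add: m_def n_def)
  define f where "f x = m * exp (- m * x) - a * b / (P * \<mu>) * ((exp (- m * x) - exp (- n * x)) / x)"
    for x
  have J_f: "J_integrand a b c P \<mu> (Delta_hat a b c P) x = f x" if "x \<in> {0<..}" for x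
    using J_integrand_Delta_hat[OF assms] that by (simp add: f_def m_def n_def)
  note density = exponential_density_set_integral[OF mn(1)]
  note frullani = frullani_exp_set_integral[OF mn]
  have frullani_scaled: "set_integrable lborel {0<..}
      (\<lambda>x. a * b / (P * \<mu>) * ((exp (- m * x) - exp (- n * x)) / x))"
    by (rule set_integrable_mult_right) (rule frullani(1))
  have f_int: "set_integrable lborel {0<..} f"
    unfolding f_def using density(1) frullani_scaled by (rule set_integral_diff(1))
  have "(LINT x:{0<..}|lborel. f x) = 1 - a * b / (P * \<mu>) * ln (n / m)"
    unfolding f_def set_integral_diff(2)[OF density(1) frullani_scaled]
      set_integral_mult_right[where a = "a * b / (P * \<mu>)"]
      density(2) frullani(2) ..
  moreover have "ln (n / m) = - ln (a * (b + c) / (a * (b + c) + P * \<mu>))"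
  proof -
    define B where "B = a * (b + c)"
    have "B > 0" using assms by (simp add: B_def)
    then have "n / m = (B + P * \<mu>) / B"
      using assms by (simp add: m_def n_def B_def[symmetric] field_simps)
    then show ?thesis using assms \<open>B > 0\<close> by (simp add: ln_div B_def)
  qed
  ultimately show "J a b c P \<mu> (Delta_hat a b c P)
      = 1 + a * b / (P * \<mu>) * ln (a * (b + c) / (a * (b + c) + P * \<mu>))"
    unfolding J_def using J_f by (subst set_lebesgue_integral_cong[of _ _ _ f]) auto
  show "set_integrable lborel {0<..} (J_integrand a b c P \<mu> (Delta_hat a b c P))"
    using f_int J_f by (subst set_integrable_cong) auto
qed

theorem mainTheorem4:
  fixes a b c P \<mu> :: real
  assumes "a > 0" "b > 0" "c > 0" "P > 0" "\<mu> > 0"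
  shows "(\<forall>\<gamma>>0. Delta a b c P \<gamma> > Delta_hat a b c P \<gamma>)
    \<and> set_integrable lborel {0<..} (J_integrand a b c P \<mu> (Delta_hat a b c P))
    \<and> set_integrable lborel {0<..} (J_integrand a b c P \<mu> (Delta a b c P))
    \<and> J a b c P \<mu> (Delta_hat a b c P)
        = 1 + (a * b) / (P * \<mu>) * ln (a * (b + c) / (a * (b + c) + P * \<mu>))
    \<and> J a b c P \<mu> (Delta_hat a b c P) < J a b c P \<mu> (Delta a b c P)"
proof -
  note J_hat = J_Delta_hat_eq[OF assms]
  have integrand_less:
    "J_integrand a b c P \<mu> (Delta_hat a b c P) \<gamma> < J_integrand a b c P \<mu> (Delta a b c P) \<gamma>"
    if "\<gamma> \<in> {0<..}" for \<gamma>
    using that assms by (intro J_integrand_less Delta_hat_less_Delta) (auto simp: Delta_hat_def)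
  have density: "set_integrable lborel {0<..} (\<lambda>\<gamma>. 1 / \<mu> * exp (- \<gamma> / \<mu>))"
    using exponential_density_set_integral(1)[of "1 / \<mu>"] assms(5) by simp
  have measurable: "set_borel_measurable lborel {0<..} (J_integrand a b c P \<mu> (Delta a b c P))"
    unfolding set_borel_measurable_def J_integrand_def Delta_def by measurable
  have J_Delta_integrable: "set_integrable lborel {0<..} (J_integrand a b c P \<mu> (Delta a b c P))"
    using J_integrand_le_density[OF assms] integrand_less
    by (intro set_integrable_between[OF J_hat(1) density measurable]) (auto intro: less_imp_le)
  have "emeasure lborel {0::real<..} \<noteq> 0"
    using emeasure_mono[of "{0<..1::real}" "{0<..}" lborel] by (auto simp: subset_eq)
  then have "J a b c P \<mu> (Delta_hat a b c P) < J a b c P \<mu> (Delta a b c P)"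
    unfolding J_def using J_hat(1) J_Delta_integrable integrand_less
    by (intro set_integral_strict_mono) simp_all
  then show ?thesis
    using Delta_hat_less_Delta assms J_hat J_Delta_integrable by blast
qed

end
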